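(* Let $(Y,\|\cdot\|)$ be a normed space and $X$ its topological dual. Let $(g_n)$ be functions on $Y$ with: (a) each $g_n$ real-valued and convex; (b) $g_n\to g$ pointwise; (d'') there is $c>0$ with $|g_n(y)|\le c(1+\|y\|)$ for all $y\in Y$, $n\ge1$. Then $(g_n^* )$ $\Gamma$-converges to $g^*$ with respect to $\sigma(X,Y)$.
   Context: Convex conjugate: $g^*(x)=\sup_{y\in Y}\{\langle x,y\rangle-g(y)\}$, $x\in X$. $\Gamma$-limit: $\Gamma\text{-}\lim f_n(x)=\sup_{V\in\mathcal{N}(x)}\lim_n\inf_{y\in V}f_n(y)$. *)

theory Defs
  imports "HOL-Analysis.Analysis"
begin

definition weak_star_topology :: "('a::real_normed_vector \<Rightarrow>\<^sub>L real) topology" where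
  "weak_star_topology =
     topology_generated_by {{x. blinfun_apply x y \<in> U} | y U. open U}"

definition conjugate :: "('a::real_normed_vector \<Rightarrow> real) \<Rightarrow> ('a \<Rightarrow>\<^sub>L real) \<Rightarrow> ereal" where
  "conjugate g x = (SUP y. ereal (blinfun_apply x y - g y))"

definition nbhds_in :: "'b topology \<Rightarrow> 'b \<Rightarrow> 'b set set" where
  "nbhds_in T x = {V. \<exists>U. openin T U \<and> x \<in> U \<and> U \<subseteq> V}"

definition gamma_liminf :: "'b topology \<Rightarrow> (nat \<Rightarrow> 'b \<Rightarrow> ereal) \<Rightarrow> 'b \<Rightarrow> ereal" where
  "gamma_liminf T f x = (SUP V \<in> nbhds_in T x. liminf (\<lambda>n. INF z\<in>V. f n z))"

definition gamma_limsup :: "'b topology \<Rightarrow> (nat \<Rightarrow> 'b \<Rightarrow> ereal) \<Rightarrow> 'b \<Rightarrow> ereal" where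
  "gamma_limsup T f x = (SUP V \<in> nbhds_in T x. limsup (\<lambda>n. INF z\<in>V. f n z))"

definition gamma_converges :: "'b topology \<Rightarrow> (nat \<Rightarrow> 'b \<Rightarrow> ereal) \<Rightarrow> ('b \<Rightarrow> ereal) \<Rightarrow> bool" where
  "gamma_converges T f h \<longleftrightarrow> (\<forall>x. gamma_liminf T f x = h x \<and> gamma_limsup T f x = h x)"

end

theory Submission
  imports Defs
begin

text \<open>
  Lower bound, Gamma-liminf \<ge> g*: for fixed y the set {z. z y > x y - e} is a weak-star
  neighbourhood of x on which (g_n)*(z) \<ge> x y - e - g_n(y); only pointwise convergence is used.

  Upper bound, Gamma-limsup \<le> g*: with s = g*(x) and \<epsilon> > 0, the convex functions
  h_n = g_n - x + s + \<epsilon> converge pointwise to a limit \<ge> \<epsilon>.  The growth bound makes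
  the g_n uniformly Lipschitz, so h_n is eventually nonnegative on every compact
  "coefficient box" spanned by a finite set F \<subseteq> Y.  By convexity this yields
  h_n(\<Sum> a_y y) + d \<Sum> |a_y| \<ge> 0, and an algebraic Hahn--Banach argument produces a
  bounded linear u \<le> h_n with |u| \<le> d on F.  Then z = x + u lies in the basic weak-star
  neighbourhood of x given by F and has (g_n)*(z) \<le> s + \<epsilon>.
\<close>

definition sublinear :: "('a::real_vector \<Rightarrow> real) \<Rightarrow> bool" where
  "sublinear q \<longleftrightarrow>
     (\<forall>v w. q (v + w) \<le> q v + q w) \<and> (\<forall>t v. t > 0 \<longrightarrow> q (t *\<^sub>R v) \<le> t * q v)"

lemma sublinearI:
  assumes "\<And>v w. q (v + w) \<le> q v + q w" and "\<And>t v. t > 0 \<Longrightarrow> q (t *\<^sub>R v) \<le> t * q v"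
  shows "sublinear q"
  using assms by (simp add: sublinear_def)

lemma sublinear_add: "sublinear q \<Longrightarrow> q (v + w) \<le> q v + q w"
  by (simp add: sublinear_def)

lemma sublinear_scale: "sublinear q \<Longrightarrow> t > 0 \<Longrightarrow> q (t *\<^sub>R v) \<le> t * q v"
  by (simp add: sublinear_def)

lemma sublinear_zero:
  assumes "sublinear q"
  shows "q 0 = 0"
proof -
  have "q ((2::real) *\<^sub>R 0) \<le> 2 * q 0" "q ((1/2::real) *\<^sub>R 0) \<le> (1/2) * q 0"
    by (rule sublinear_scale[OF assms], simp)+
  then show ?thesis by simp
qed

lemma sublinear_homogeneous:
  assumes q: "sublinear q" and t: "t \<ge> 0"
  shows "q (t *\<^sub>R v) = t * q v"
proof (cases "t = 0")
  case True
  then show ?thesis using sublinear_zero[OF q] by simp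
next
  case False
  with t have t: "t > 0" by simp
  have "q v = q ((1/t) *\<^sub>R (t *\<^sub>R v))" using t by simp
  also have "\<dots> \<le> (1/t) * q (t *\<^sub>R v)" by (rule sublinear_scale[OF q]) (use t in simp)
  finally have "t * q v \<le> q (t *\<^sub>R v)" using t by (simp add: field_simps)
  with sublinear_scale[OF q t, of v] show ?thesis by simp
qed

lemma sublinear_neg_le: "sublinear q \<Longrightarrow> - q (- v) \<le> q v"
  using sublinear_add[of q v "- v"] sublinear_zero[of q] by simp

text \<open>Lowering a sublinear functional along a direction a: the infimum of
  q(v + t a) - t q(a) over t \<ge> 0 is again sublinear, lies below q, and is
  anti-symmetric at a.  This is the step that makes a minimal sublinear functional linear.\<close>

definition lowered_along :: "('a::real_vector \<Rightarrow> real) \<Rightarrow> 'a \<Rightarrow> 'a \<Rightarrow> real" where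
  "lowered_along q a v = (INF t\<in>{0..}. q (v + t *\<^sub>R a) - t * q a)"

context
  fixes q :: "'a::real_vector \<Rightarrow> real" and a :: 'a
  assumes q: "sublinear q"
begin

lemma lowered_along_le:
  assumes "t \<ge> 0"
  shows "lowered_along q a v \<le> q (v + t *\<^sub>R a) - t * q a"
proof -
  have "- q (- v) \<le> q (v + s *\<^sub>R a) - s * q a" if "s \<ge> 0" for s
  proof -
    have "q (s *\<^sub>R a) \<le> q (v + s *\<^sub>R a) + q (- v)"
      using sublinear_add[OF q, of "v + s *\<^sub>R a" "- v"] by simp
    then show ?thesis using sublinear_homogeneous[OF q that, of a] by simp
  qed
  then have "bdd_below ((\<lambda>s. q (v + s *\<^sub>R a) - s * q a) ` {0..})"
    by (intro bdd_belowI2) auto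
  then show ?thesis
    unfolding lowered_along_def by (rule cINF_lower) (use assms in simp)
qed

lemma lowered_along_greatest:
  assumes "\<And>t. t \<ge> 0 \<Longrightarrow> b \<le> q (v + t *\<^sub>R a) - t * q a"
  shows "b \<le> lowered_along q a v"
  unfolding lowered_along_def by (rule cINF_greatest) (use assms in auto)

lemma lowered_along_sublinear: "sublinear (lowered_along q a)"
proof (rule sublinearI)
  fix v w
  have split: "lowered_along q a (v + w)
      \<le> (q (v + t *\<^sub>R a) - t * q a) + (q (w + s *\<^sub>R a) - s * q a)" if "t \<ge> 0" "s \<ge> 0" for t s
  proof -
    have "q (v + w + (t + s) *\<^sub>R a) \<le> q (v + t *\<^sub>R a) + q (w + s *\<^sub>R a)"
      using sublinear_add[OF q, of "v + t *\<^sub>R a" "w + s *\<^sub>R a"] by (simp add: algebra_simps)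
    with lowered_along_le[of "t + s" "v + w"] that show ?thesis by (simp add: algebra_simps)
  qed
  have "lowered_along q a (v + w) - (q (w + s *\<^sub>R a) - s * q a) \<le> lowered_along q a v"
    if "s \<ge> 0" for s
    by (rule lowered_along_greatest) (use split that in force)
  then have "lowered_along q a (v + w) - lowered_along q a v \<le> lowered_along q a w"
    by (intro lowered_along_greatest) force
  then show "lowered_along q a (v + w) \<le> lowered_along q a v + lowered_along q a w"
    by simp
next
  fix t :: real and v assume t: "t > 0"
  have "lowered_along q a (t *\<^sub>R v) / t \<le> lowered_along q a v"
  proof (rule lowered_along_greatest)
    fix s :: real assume s: "s \<ge> 0"
    have "lowered_along q a (t *\<^sub>R v) \<le> q (t *\<^sub>R v + (t * s) *\<^sub>R a) - (t * s) * q a"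
      using lowered_along_le[of "t * s" "t *\<^sub>R v"] t s by simp
    also have "q (t *\<^sub>R v + (t * s) *\<^sub>R a) = t * q (v + s *\<^sub>R a)"
      using sublinear_homogeneous[OF q, of t "v + s *\<^sub>R a"] t by (simp add: algebra_simps)
    finally show "lowered_along q a (t *\<^sub>R v) / t \<le> q (v + s *\<^sub>R a) - s * q a"
      using t by (simp add: field_simps)
  qed
  then show "lowered_along q a (t *\<^sub>R v) \<le> t * lowered_along q a v"
    using t by (simp add: field_simps)
qed

lemma lowered_along_below: "lowered_along q a v \<le> q v"
  using lowered_along_le[of 0 v] by simp

lemma lowered_along_direction: "lowered_along q a (- a) \<le> - q a"
  using lowered_along_le[of 1 "- a"] sublinear_zero[OF q] by simp


end

lemma minimal_sublinear_linear:
  assumes q: "sublinear q"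
    and minimal: "\<And>r. sublinear r \<Longrightarrow> (\<forall>v. r v \<le> q v) \<Longrightarrow> r = q"
  shows "linear q"
proof -
  have odd: "q (- a) = - q a" for a
  proof -
    have "lowered_along q a = q"
      using minimal lowered_along_sublinear[OF q] lowered_along_below[OF q] by blast
    then show ?thesis
      using lowered_along_direction[OF q, of a] sublinear_neg_le[OF q, of a] by simp
  qed
  show ?thesis
  proof (rule linearI)
    fix v w
    have "q v + q w = - q (- v) - q (- w)" using odd by simp
    also have "\<dots> \<le> - q (- (v + w))"
      using sublinear_add[OF q, of "- v" "- w"] by (simp add: add.commute)
    finally show "q (v + w) = q v + q w"
      using sublinear_add[OF q, of v w] odd[of "v + w"] by simp
  next
    fix t :: real and v
    show "q (t *\<^sub>R v) = t *\<^sub>R q v"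
    proof (cases "t \<ge> 0")
      case True
      then show ?thesis using sublinear_homogeneous[OF q] by simp
    next
      case False
      then have "q ((- t) *\<^sub>R (- v)) = (- t) * q (- v)"
        by (intro sublinear_homogeneous[OF q]) simp
      then show ?thesis using odd[of v] by simp
    qed
  qed
qed

lemma sublinear_chain_Inf:
  assumes ne: "C \<noteq> {}"
    and sub: "\<And>q. q \<in> C \<Longrightarrow> sublinear q \<and> (\<forall>v. q v \<le> P v)"
    and chain: "\<And>q1 q2. q1 \<in> C \<Longrightarrow> q2 \<in> C \<Longrightarrow> (\<forall>v. q1 v \<le> q2 v) \<or> (\<forall>v. q2 v \<le> q1 v)"
  shows "sublinear (\<lambda>v. INF q\<in>C. q v)" and "\<And>q v. q \<in> C \<Longrightarrow> (INF q\<in>C. q v) \<le> q v"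
proof -
  define u where "u v = (INF q\<in>C. q v)" for v
  have bdd: "bdd_below ((\<lambda>q. q v) ` C)" for v
  proof (rule bdd_belowI2)
    fix q assume "q \<in> C"
    then have "- P (- v) \<le> - q (- v)" "- q (- v) \<le> q v"
      using sub sublinear_neg_le by auto
    then show "- P (- v) \<le> q v" by linarith
  qed
  show below: "(INF q\<in>C. q v) \<le> q v" if "q \<in> C" for q v
    by (rule cINF_lower[OF bdd that])
  have below_u: "u v \<le> q v" if "q \<in> C" for q v
    unfolding u_def using below[OF that] .
  have greatest: "b \<le> u v" if "\<And>q. q \<in> C \<Longrightarrow> b \<le> q v" for b v
    unfolding u_def by (rule cINF_greatest) (use ne that in auto)
  show "sublinear (\<lambda>v. INF q\<in>C. q v)"
    unfolding u_def[symmetric]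
  proof (rule sublinearI)
    fix v w
    have "u (v + w) \<le> q1 v + q2 w" if q12: "q1 \<in> C" "q2 \<in> C" for q1 q2
    proof -
      obtain q where "q \<in> C" "q v \<le> q1 v" "q w \<le> q2 w"
        using chain[OF q12] q12 by (metis order_refl)
      then show ?thesis
        using below_u[of q "v + w"] sublinear_add[of q v w] sub by fastforce
    qed
    then have "u (v + w) - q2 w \<le> u v" if "q2 \<in> C" for q2
      using that by (intro greatest) force
    then have "u (v + w) - u v \<le> u w"
      by (intro greatest) force
    then show "u (v + w) \<le> u v + u w" by simp
  next
    fix t :: real and v assume t: "t > 0"
    have "u (t *\<^sub>R v) / t \<le> u v"
    proof (rule greatest)
      fix q assume "q \<in> C"
      then have "u (t *\<^sub>R v) \<le> t * q v"
        using below_u[of q "t *\<^sub>R v"] sublinear_scale[of q t v] sub t by fastforce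
      then show "u (t *\<^sub>R v) / t \<le> q v" using t by (simp add: field_simps)
    qed
    then show "u (t *\<^sub>R v) \<le> t * u v" using t by (simp add: field_simps)
  qed
qed

text \<open>Algebraic Hahn--Banach theorem: every sublinear functional dominates a linear one.
  A pointwise minimal sublinear functional below P exists by Zorn's lemma.\<close>

theorem linear_below_sublinear:
  fixes P :: "'a::real_vector \<Rightarrow> real"
  assumes P: "sublinear P"
  shows "\<exists>u. linear u \<and> (\<forall>v. u v \<le> P v)"
proof -
  define A where "A = {q. sublinear q \<and> (\<forall>v. q v \<le> P v)}"
  define R where "R = (\<lambda>q1 q2::'a \<Rightarrow> real. \<forall>v. q2 v \<le> q1 v)"
  have po: "partial_order_on A (relation_of R A)"
    unfolding partial_order_on_def preorder_on_def refl_on_def trans_def antisym_def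
      relation_of_def R_def
    by (auto intro: order_trans antisym ext) (meson antisym ext)
  have "\<exists>u\<in>A. \<forall>q\<in>C. R q u" if C: "C \<in> Chains (relation_of R A)" for C
  proof (cases "C = {}")
    case True
    then show ?thesis using P unfolding A_def by auto
  next
    case False
    have sub: "sublinear q \<and> (\<forall>v. q v \<le> P v)" if "q \<in> C" for q
      using C that unfolding Chains_def relation_of_def A_def by auto
    have chain: "(\<forall>v. q1 v \<le> q2 v) \<or> (\<forall>v. q2 v \<le> q1 v)" if "q1 \<in> C" "q2 \<in> C" for q1 q2
      using C that unfolding Chains_def relation_of_def R_def by auto
    note inf = sublinear_chain_Inf[OF False sub chain]
    obtain q0 where "q0 \<in> C" using False by blast
    then have "(INF q\<in>C. q v) \<le> P v" for v
      using inf(2)[of q0 v] sub[of q0] by (blast intro: order_trans)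
    then have in_A: "(\<lambda>v. INF q\<in>C. q v) \<in> A"
      unfolding A_def using inf(1) by blast
    show ?thesis unfolding R_def by (rule bexI[OF _ in_A]) (use inf(2) in blast)
  qed
  then obtain m where m: "m \<in> A" and max: "\<And>q. q \<in> A \<Longrightarrow> R m q \<Longrightarrow> q = m"
    using predicate_Zorn[OF po] by blast
  have "linear m"
  proof (rule minimal_sublinear_linear)
    show "sublinear m" using m unfolding A_def by blast
    show "r = m" if r: "sublinear r" "\<forall>v. r v \<le> m v" for r
    proof (rule max)
      have "r v \<le> P v" for v
        using r(2) m unfolding A_def by (blast intro: order_trans)
      then show "r \<in> A" using r(1) unfolding A_def by blast
      show "R m r" using r(2) unfolding R_def by blast
    qed
  qed
  then show ?thesis using m unfolding A_def by blast
qed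

lemma le_of_le_plus_vanishing:
  fixes r A B :: real
  assumes "\<And>t. t \<ge> 1 \<Longrightarrow> r \<le> A / t + B"
  shows "r \<le> B"
proof (rule tendsto_lowerbound)
  show "(\<lambda>n. A / real n + B) \<longlonglongrightarrow> B"
    using tendsto_add[OF lim_const_over_n[of A] tendsto_const[of B]] by simp
  show "\<forall>\<^sub>F n in sequentially. r \<le> A / real n + B"
    using eventually_ge_at_top[of 1] by eventually_elim (use assms in simp)
qed simp

text \<open>A convex function of linear growth |f y| \<le> c (1 + \<parallel>y\<parallel>) is c-Lipschitz:
  compare f along the ray from y through y' far beyond y', where the growth bound applies.\<close>

lemma convex_linear_growth_increment:
  fixes f :: "'a::real_normed_vector \<Rightarrow> real"
  assumes cv: "convex_on UNIV f" and growth: "\<And>y. \<bar>f y\<bar> \<le> c * (1 + norm y)"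
  shows "f y' - f y \<le> c * norm (y' - y)"
proof (rule le_of_le_plus_vanishing)
  fix t :: real assume t: "t \<ge> 1"
  define z where "z = y + t *\<^sub>R (y' - y)"
  have c: "c \<ge> 0" using growth[of 0] by simp
  have "(1 - 1/t) *\<^sub>R y + (1/t) *\<^sub>R z = y'"
    using t unfolding z_def by (simp add: algebra_simps)
  then have "f y' \<le> (1 - 1/t) * f y + (1/t) * f z"
    using convex_onD[OF cv, of "1/t" y z] t by simp
  moreover have "norm z \<le> norm y + t * norm (y' - y)"
    unfolding z_def using t norm_triangle_ineq[of y "t *\<^sub>R (y' - y)"] by simp
  then have "c * norm z \<le> c * (norm y + t * norm (y' - y))"
    using c by (rule mult_left_mono)
  then have "f z \<le> c * (1 + norm y) + t * (c * norm (y' - y))"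
    using growth[of z] by (simp add: algebra_simps)
  then have "(1/t) * f z \<le> (1/t) * (c * (1 + norm y)) + c * norm (y' - y)"
    using t by (simp add: field_simps)
  ultimately show "f y' - f y \<le> (c * (1 + norm y) - f y) / t + c * norm (y' - y)"
    by (simp add: algebra_simps add_divide_distrib diff_divide_distrib)
qed

lemma convex_linear_growth_lipschitz:
  fixes f :: "'a::real_normed_vector \<Rightarrow> real"
  assumes "convex_on UNIV f" and "\<And>y. \<bar>f y\<bar> \<le> c * (1 + norm y)"
  shows "\<bar>f y - f y'\<bar> \<le> c * norm (y - y')"
  using convex_linear_growth_increment[OF assms, of y y']
    convex_linear_growth_increment[OF assms, of y' y]
  by (simp add: norm_minus_commute abs_le_iff)

text \<open>Combinations of a finite set F of vectors with coefficients bounded by T; being a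
  continuous image of a cube, such a box is compact, which gives uniformity of convergence.\<close>

definition coefficient_box :: "'a::real_normed_vector set \<Rightarrow> real \<Rightarrow> 'a set" where
  "coefficient_box F T = {(\<Sum>y\<in>F. b y *\<^sub>R y) | b. \<forall>y\<in>F. \<bar>b y\<bar> \<le> T}"

lemma coefficient_boxI:
  "(\<And>y. y \<in> F \<Longrightarrow> \<bar>b y\<bar> \<le> T) \<Longrightarrow> (\<Sum>y\<in>F. b y *\<^sub>R y) \<in> coefficient_box F T"
  unfolding coefficient_box_def by blast

lemma coefficient_box_insert:
  assumes "finite F" "y \<notin> F"
  shows "coefficient_box (insert y F) T
       = (\<lambda>(w, \<beta>). w + \<beta> *\<^sub>R y) ` (coefficient_box F T \<times> {-T..T})"
proof (intro set_eqI iffI)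
  fix v assume "v \<in> coefficient_box (insert y F) T"
  then obtain b where v: "v = (\<Sum>z\<in>insert y F. b z *\<^sub>R z)" and b: "\<forall>z\<in>insert y F. \<bar>b z\<bar> \<le> T"
    unfolding coefficient_box_def by auto
  have "v = (\<Sum>z\<in>F. b z *\<^sub>R z) + b y *\<^sub>R y" using v assms by (simp add: add.commute)
  moreover have "(\<Sum>z\<in>F. b z *\<^sub>R z) \<in> coefficient_box F T" using b by (intro coefficient_boxI) auto
  moreover have "b y \<in> {-T..T}" using b by auto
  ultimately show "v \<in> (\<lambda>(w, \<beta>). w + \<beta> *\<^sub>R y) ` (coefficient_box F T \<times> {-T..T})" by force
next
  fix v assume "v \<in> (\<lambda>(w, \<beta>). w + \<beta> *\<^sub>R y) ` (coefficient_box F T \<times> {-T..T})"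
  then obtain b \<beta> where v: "v = (\<Sum>z\<in>F. b z *\<^sub>R z) + \<beta> *\<^sub>R y"
    and b: "\<forall>z\<in>F. \<bar>b z\<bar> \<le> T" and \<beta>: "\<beta> \<in> {-T..T}"
    unfolding coefficient_box_def by auto
  have "(\<Sum>z\<in>F. (b(y := \<beta>)) z *\<^sub>R z) = (\<Sum>z\<in>F. b z *\<^sub>R z)"
    using assms by (intro sum.cong) auto
  then have "v = (\<Sum>z\<in>insert y F. (b(y := \<beta>)) z *\<^sub>R z)"
    using v assms by (simp add: add.commute)
  then show "v \<in> coefficient_box (insert y F) T"
    using b \<beta> by (auto intro!: coefficient_boxI)
qed

lemma compact_coefficient_box:
  fixes F :: "'a::real_normed_vector set"
  shows "finite F \<Longrightarrow> compact (coefficient_box F T)"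
proof (induction F rule: finite_induct)
  case empty
  have "coefficient_box ({}::'a set) T = {0}" unfolding coefficient_box_def by auto
  then show ?case by simp
next
  case (insert y F)
  have "compact ((\<lambda>(w, \<beta>). w + \<beta> *\<^sub>R y) ` (coefficient_box F T \<times> {-T..T}))"
    by (intro compact_continuous_image compact_Times insert.IH compact_Icc)
       (auto intro!: continuous_intros simp: case_prod_unfold)
  then show ?case using coefficient_box_insert[OF insert.hyps] by simp
qed

text \<open>Equi-Lipschitz functions converging pointwise to a limit bounded below by e > 0
  are eventually nonnegative uniformly on a compact set (cover it by finitely many small balls).\<close>

lemma eventually_nonneg_on_compact:
  fixes hs :: "nat \<Rightarrow> 'a::real_normed_vector \<Rightarrow> real"
  assumes K: "compact K" and C: "C > 0"
    and lip: "\<And>n y y'. \<bar>hs n y - hs n y'\<bar> \<le> C * norm (y - y')"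
    and lim: "\<And>y. (\<lambda>n. hs n y) \<longlonglongrightarrow> l y" and e: "e > 0" and l_ge: "\<And>y. l y \<ge> e"
  shows "\<forall>\<^sub>F n in sequentially. \<forall>y\<in>K. hs n y \<ge> 0"
proof -
  obtain k where k: "finite k" "K \<subseteq> (\<Union>x\<in>k. ball x (e / (2 * C)))"
    using K C e unfolding compact_eq_totally_bounded by (meson divide_pos_pos mult_pos_pos zero_less_numeral)
  have "\<forall>\<^sub>F n in sequentially. e / 2 < hs n x" for x
    using l_ge[of x] e by (intro order_tendstoD(1)[OF lim]) linarith
  then have "\<forall>\<^sub>F n in sequentially. \<forall>x\<in>k. e / 2 < hs n x"
    using k(1) by (simp add: eventually_ball_finite_distrib)
  then show ?thesis
  proof eventually_elim
    case (elim n)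
    show "\<forall>y\<in>K. hs n y \<ge> 0"
    proof
      fix y assume "y \<in> K"
      then obtain x where x: "x \<in> k" "norm (y - x) < e / (2 * C)"
        using k(2) by (auto simp: dist_norm norm_minus_commute)
      have "C * norm (y - x) \<le> e / 2"
        using x(2) C by (simp add: field_simps)
      then show "hs n y \<ge> 0" using lip[of n y x] elim x(1) by fastforce
    qed
  qed
qed

text \<open>A convex function that is nonnegative on the box of side B/d and at most B at 0
  satisfies h(\<Sum> a y y) + d \<Sum> |a y| \<ge> 0 for all coefficients: outside the box,
  shrink the point into the box along the segment to 0 and use convexity.\<close>

lemma convex_nonneg_on_box_penalized:
  fixes h :: "'a::real_normed_vector \<Rightarrow> real"
  assumes cv: "convex_on UNIV h" and F: "finite F" and d: "d > 0" and B: "B > 0"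
    and h0: "h 0 \<le> B" and nonneg: "\<forall>w\<in>coefficient_box F (B / d). h w \<ge> 0"
  shows "h (\<Sum>y\<in>F. a y *\<^sub>R y) + d * (\<Sum>y\<in>F. \<bar>a y\<bar>) \<ge> 0"
proof -
  define T where "T = B / d"
  define w where "w = (\<Sum>y\<in>F. a y *\<^sub>R y)"
  define m where "m = (\<Sum>y\<in>F. \<bar>a y\<bar>)"
  have T: "T > 0" unfolding T_def using B d by simp
  have a_le: "\<bar>a y\<bar> \<le> m" if "y \<in> F" for y
    unfolding m_def by (rule member_le_sum[OF that _ F]) simp
  show ?thesis
  proof (cases "m \<le> T")
    case True
    then have "w \<in> coefficient_box F T"
      unfolding w_def using a_le by (force intro: coefficient_boxI)
    then show ?thesis using nonneg d unfolding T_def w_def m_def by (simp add: sum_nonneg)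
  next
    case False
    define \<mu> where "\<mu> = T / m"
    have \<mu>: "0 < \<mu>" "\<mu> \<le> 1" "\<mu> * m = T" unfolding \<mu>_def using False T by auto
    have "\<mu> *\<^sub>R w = (\<Sum>y\<in>F. (\<mu> * a y) *\<^sub>R y)"
      unfolding w_def by (simp add: scaleR_sum_right)
    also have "\<dots> \<in> coefficient_box F T"
    proof (rule coefficient_boxI)
      fix y assume "y \<in> F"
      then show "\<bar>\<mu> * a y\<bar> \<le> T"
        using a_le \<mu> by (simp add: abs_mult) (metis mult_left_mono less_imp_le)
    qed
    finally have "0 \<le> h ((1 - \<mu>) *\<^sub>R 0 + \<mu> *\<^sub>R w)" using nonneg unfolding T_def by simp
    also have "\<dots> \<le> (1 - \<mu>) * h 0 + \<mu> * h w"
      by (rule convex_onD[OF cv]) (use \<mu> in auto)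
    also have "\<dots> \<le> (1 - \<mu>) * B + \<mu> * h w"
      using mult_left_mono[OF h0, of "1 - \<mu>"] \<mu> by simp
    also have "\<dots> \<le> B + \<mu> * h w"
      using \<mu> B by (simp add: algebra_simps)
    finally have "- B \<le> \<mu> * h w" by simp
    then have "- (B / \<mu>) \<le> h w" using \<mu>(1) by (simp add: field_simps)
    moreover have "B / \<mu> = d * m"
      using \<mu> T d unfolding T_def by (simp add: field_simps)
    ultimately show ?thesis unfolding w_def m_def by simp
  qed
qed

text \<open>The minorant is obtained
  by Hahn--Banach from the sublinear gauge
    G v = inf over t > 0 and a of (h (t v - \<Sum> a y y) + d \<Sum> |a y|) / t.\<close>

locale penalized_minorant =
  fixes h :: "'a::real_normed_vector \<Rightarrow> real" and F :: "'a set" and d C :: real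
  assumes convex: "convex_on UNIV h" and finite: "finite F" and d_pos: "d > 0"
    and lipschitz: "\<And>y y'. \<bar>h y - h y'\<bar> \<le> C * norm (y - y')"
    and penalized_nonneg: "\<And>a. h (\<Sum>y\<in>F. a y *\<^sub>R y) + d * (\<Sum>y\<in>F. \<bar>a y\<bar>) \<ge> 0"
begin

definition comb :: "('a \<Rightarrow> real) \<Rightarrow> 'a" where
  "comb a = (\<Sum>y\<in>F. a y *\<^sub>R y)"

definition weight :: "('a \<Rightarrow> real) \<Rightarrow> real" where
  "weight a = (\<Sum>y\<in>F. \<bar>a y\<bar>)"

definition quotient :: "'a \<Rightarrow> real \<Rightarrow> ('a \<Rightarrow> real) \<Rightarrow> real" where
  "quotient v t a = (h (t *\<^sub>R v - comb a) + d * weight a) / t"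

definition gauge :: "'a \<Rightarrow> real" where
  "gauge v = Inf {quotient v t a | t a. t > 0}"

lemma comb_minus: "comb (\<lambda>y. - a y) = - comb a"
  unfolding comb_def by (simp add: sum_negf)

lemma weight_minus: "weight (\<lambda>y. - a y) = weight a"
  unfolding weight_def by simp

lemma comb_zero: "comb (\<lambda>y. 0) = 0" and weight_zero: "weight (\<lambda>y. 0) = 0"
  unfolding comb_def weight_def by simp_all

text \<open>The quotients at v are bounded below by -C\<parallel>v\<parallel> (penalized nonnegativity plus the
  Lipschitz bound), so the gauge is a genuine infimum.\<close>

lemma quotient_lower_bound:
  assumes t: "t > 0"
  shows "- (C * norm v) \<le> quotient v t a"
proof -
  have "h (- comb a) + d * weight a \<ge> 0"
    using penalized_nonneg[of "\<lambda>y. - a y"] comb_minus[of a] weight_minus[of a]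
    unfolding comb_def weight_def by simp
  moreover have "h (- comb a) - h (t *\<^sub>R v - comb a) \<le> C * (t * norm v)"
    using lipschitz[of "- comb a" "t *\<^sub>R v - comb a"] t by simp
  ultimately have "- (C * norm v) * t \<le> h (t *\<^sub>R v - comb a) + d * weight a"
    by (simp add: algebra_simps)
  then show ?thesis unfolding quotient_def using t by (simp add: pos_le_divide_eq)
qed

lemma gauge_le:
  assumes "t > 0"
  shows "gauge v \<le> quotient v t a"
  unfolding gauge_def
proof (rule cInf_lower)
  show "bdd_below {quotient v t a | t a. t > 0}"
    by (rule bdd_belowI[of _ "- (C * norm v)"]) (auto intro: quotient_lower_bound)
qed (use assms in blast)

lemma gauge_greatest:
  assumes "\<And>t a. t > 0 \<Longrightarrow> b \<le> quotient v t a"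
  shows "b \<le> gauge v"
  unfolding gauge_def
proof (rule cInf_greatest)
  show "{quotient v t a | t a. t > 0} \<noteq> {}" using zero_less_one by blast
qed (use assms in blast)

text \<open>Convexity of h makes the gauge subadditive: quotients for v (scale t, coefficients a)
  and for w (scale s, coefficients b) combine, at scale ts/(t + s) with the convex combination
  of the coefficients, into a quotient for v + w that is at most their sum.\<close>

lemma gauge_add_le_quotients:
  assumes t: "t > 0" and s: "s > 0"
  shows "gauge (v + w) \<le> quotient v t a + quotient w s b"
proof -
  define r where "r = t * s / (t + s)"
  define l where "l = t / (t + s)"
  define c where "c = (\<lambda>y. (1 - l) * a y + l * b y)"
  define A where "A = t *\<^sub>R v - comb a"
  define B where "B = s *\<^sub>R w - comb b"
  have r: "r > 0" and l: "0 \<le> l" "l \<le> 1"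
    unfolding r_def l_def using t s by auto
  have lt: "(1 - l) * t = r" and ls: "l * s = r"
    unfolding l_def r_def using t s by (simp_all add: field_simps)
  then have coeff: "(1 - l) / r = 1 / t" "l / r = 1 / s"
    using t s r by (simp_all add: field_simps)
  have comb_c: "comb c = (1 - l) *\<^sub>R comb a + l *\<^sub>R comb b"
    unfolding comb_def c_def by (simp add: scaleR_add_left sum.distrib scaleR_sum_right)
  have "r *\<^sub>R (v + w) - comb c
      = ((1 - l) * t) *\<^sub>R v + (l * s) *\<^sub>R w - ((1 - l) *\<^sub>R comb a + l *\<^sub>R comb b)"
    by (simp add: lt ls comb_c scaleR_add_right)
  also have "\<dots> = (1 - l) *\<^sub>R A + l *\<^sub>R B"
    unfolding A_def B_def by (simp add: algebra_simps)
  finally have point: "r *\<^sub>R (v + w) - comb c = (1 - l) *\<^sub>R A + l *\<^sub>R B" .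
  have "weight c \<le> (\<Sum>y\<in>F. (1 - l) * \<bar>a y\<bar> + l * \<bar>b y\<bar>)"
    unfolding weight_def c_def
    by (rule sum_mono) (use l in \<open>simp add: abs_mult abs_triangle_ineq[THEN order_trans]\<close>)
  then have "weight c \<le> (1 - l) * weight a + l * weight b"
    by (simp add: weight_def sum.distrib sum_distrib_left)
  then have "d * weight c \<le> d * ((1 - l) * weight a + l * weight b)"
    using d_pos by (simp add: mult_left_mono)
  moreover have "h (r *\<^sub>R (v + w) - comb c) \<le> (1 - l) * h A + l * h B"
    unfolding point by (rule convex_onD[OF convex l]) auto
  ultimately have "h (r *\<^sub>R (v + w) - comb c) + d * weight c
      \<le> (1 - l) * (h A + d * weight a) + l * (h B + d * weight b)"
    by (simp add: algebra_simps)
  then have "quotient (v + w) r c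
      \<le> ((1 - l) * (h A + d * weight a) + l * (h B + d * weight b)) / r"
    unfolding quotient_def using r by (simp add: divide_right_mono)
  also have "\<dots> = ((1 - l) / r) * (h A + d * weight a) + (l / r) * (h B + d * weight b)"
    by (simp add: add_divide_distrib)
  also have "\<dots> = quotient v t a + quotient w s b"
    unfolding coeff quotient_def A_def B_def by simp
  finally show ?thesis using gauge_le[OF r, of "v + w" c] by linarith
qed

lemma quotient_scale:
  assumes "\<mu> > 0"
  shows "quotient (\<mu> *\<^sub>R v) (t / \<mu>) a = \<mu> * quotient v t a"
  unfolding quotient_def using assms by (simp add: field_simps)

lemma gauge_sublinear: "sublinear gauge"
proof (rule sublinearI)
  fix v w
  have "gauge (v + w) - quotient w s b \<le> gauge v" if s: "s > 0" for s b
  proof (rule gauge_greatest)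
    fix t a assume "(t::real) > 0"
    then show "gauge (v + w) - quotient w s b \<le> quotient v t a"
      using gauge_add_le_quotients[of t s v w a b] s by linarith
  qed
  then have "gauge (v + w) - gauge v \<le> gauge w"
    by (intro gauge_greatest) (simp add: algebra_simps)
  then show "gauge (v + w) \<le> gauge v + gauge w" by simp
next
  fix \<mu> :: real and v assume \<mu>: "\<mu> > 0"
  have "gauge (\<mu> *\<^sub>R v) / \<mu> \<le> gauge v"
  proof (rule gauge_greatest)
    fix t :: real and a assume "t > 0"
    then have "gauge (\<mu> *\<^sub>R v) \<le> \<mu> * quotient v t a"
      using gauge_le[of "t / \<mu>" "\<mu> *\<^sub>R v" a] quotient_scale[OF \<mu>] \<mu> by simp
    then show "gauge (\<mu> *\<^sub>R v) / \<mu> \<le> quotient v t a" using \<mu> by (simp add: field_simps)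
  qed
  then show "gauge (\<mu> *\<^sub>R v) \<le> \<mu> * gauge v" using \<mu> by (simp add: field_simps)
qed

lemma gauge_le_scaled: "t > 0 \<Longrightarrow> gauge v \<le> h (t *\<^sub>R v) / t"
  using gauge_le[of t v "\<lambda>y. 0"] unfolding quotient_def comb_zero weight_zero by simp

lemma gauge_le_on_F:
  assumes y0: "y0 \<in> F" and t: "t > 0"
  shows "gauge y0 \<le> h 0 / t + d" and "gauge (- y0) \<le> h 0 / t + d"
proof -
  define e where "e y = (if y = y0 then t else 0)" for y
  have comb_e: "comb e = t *\<^sub>R y0" and weight_e: "weight e = t"
    unfolding comb_def weight_def e_def using finite y0 t
    by (simp_all add: if_distrib[of "\<lambda>s. s *\<^sub>R _"] sum.delta' cong: if_cong)
  show "gauge y0 \<le> h 0 / t + d"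
    using gauge_le[OF t, of y0 e] t unfolding quotient_def comb_e weight_e
    by (simp add: field_simps)
  show "gauge (- y0) \<le> h 0 / t + d"
    using gauge_le[OF t, of "- y0" "\<lambda>y. - e y"] t
    unfolding quotient_def comb_minus weight_minus comb_e weight_e
    by (simp add: field_simps)
qed

text \<open>A linear u below the gauge lies below h
  (quotient with t = 1, a = 0), is bounded by C\<parallel>v\<parallel> (quotients with a = 0 and t \<rightarrow> \<infinity>),
  and is at most d in absolute value on F (the concentrated quotients with t \<rightarrow> \<infinity>).\<close>

theorem bounded_linear_minorant:
  "\<exists>u. bounded_linear u \<and> (\<forall>y. u y \<le> h y) \<and> (\<forall>y\<in>F. \<bar>u y\<bar> \<le> d)"
proof -
  obtain u where u: "linear u" and u_le: "\<And>v. u v \<le> gauge v"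
    using linear_below_sublinear[OF gauge_sublinear] by blast
  have u_neg: "u (- v) = - u v" for v using linear_neg[OF u] .
  have "u y \<le> h y" for y using u_le[of y] gauge_le_scaled[of 1 y] by simp
  moreover have "u v \<le> C * norm v" for v
  proof (rule le_of_le_plus_vanishing)
    fix t :: real assume t: "t \<ge> 1"
    have "h (t *\<^sub>R v) \<le> h 0 + C * (t * norm v)"
      using lipschitz[of "t *\<^sub>R v" 0] t by simp
    then have "h (t *\<^sub>R v) / t \<le> h 0 / t + C * norm v"
      using t by (simp add: field_simps)
    then show "u v \<le> h 0 / t + C * norm v"
      using u_le[of v] gauge_le_scaled[of t v] t by linarith
  qed
  then have "\<bar>u v\<bar> \<le> C * norm v" for v
    using u_neg[of v] by (metis abs_le_iff minus_le_iff norm_minus_cancel)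
  then have "bounded_linear u"
    by (intro bounded_linear_intro[of _ C])
      (simp_all add: linear_add[OF u] linear_scale[OF u] mult.commute)
  moreover have "\<bar>u y\<bar> \<le> d" if "y \<in> F" for y
  proof -
    have u_le_d: "u v \<le> d" if "\<And>t. t > 0 \<Longrightarrow> gauge v \<le> h 0 / t + d" for v
    proof (rule le_of_le_plus_vanishing)
      fix t :: real assume "t \<ge> 1"
      then show "u v \<le> h 0 / t + d" using u_le[of v] that[of t] by simp
    qed
    have "u y \<le> d" "u (- y) \<le> d"
      using gauge_le_on_F[OF \<open>y \<in> F\<close>] by (blast intro: u_le_d)+
    then show ?thesis using u_neg[of y] by simp
  qed
  ultimately show ?thesis by blast
qed

end

definition weak_star_box ::
    "('a::real_normed_vector \<Rightarrow>\<^sub>L real) \<Rightarrow> 'a set \<Rightarrow> real \<Rightarrow> ('a \<Rightarrow>\<^sub>L real) set" where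
  "weak_star_box x F \<delta> = {z. \<forall>y\<in>F. \<bar>blinfun_apply z y - blinfun_apply x y\<bar> < \<delta>}"

lemma weak_star_box_antimono:
  "F \<subseteq> F' \<Longrightarrow> \<delta>' \<le> \<delta> \<Longrightarrow> weak_star_box x F' \<delta>' \<subseteq> weak_star_box x F \<delta>"
  unfolding weak_star_box_def by fastforce

lemma weak_star_subbasic_open:
  "open W \<Longrightarrow> openin weak_star_topology {z. blinfun_apply z y \<in> W}"
  unfolding weak_star_topology_def openin_topology_generated_by_iff
  by (rule generate_topology_on.Basis) blast

lemma weak_star_open_contains_box:
  assumes "openin weak_star_topology U" "x \<in> U"
  shows "\<exists>F \<delta>. finite F \<and> \<delta> > 0 \<and> weak_star_box x F \<delta> \<subseteq> U"
proof -
  have "generate_topology_on {{x. blinfun_apply x y \<in> W} | y W. open W} U"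
    using assms(1) unfolding weak_star_topology_def openin_topology_generated_by_iff .
  then have "\<forall>x\<in>U. \<exists>F \<delta>. finite F \<and> \<delta> > 0 \<and> weak_star_box x F \<delta> \<subseteq> U"
  proof (induction rule: generate_topology_on.induct)
    case (Int U1 U2)
    show ?case
    proof
      fix x assume "x \<in> U1 \<inter> U2"
      then obtain F1 \<delta>1 F2 \<delta>2
        where "finite F1" "\<delta>1 > 0" "weak_star_box x F1 \<delta>1 \<subseteq> U1"
          and "finite F2" "\<delta>2 > 0" "weak_star_box x F2 \<delta>2 \<subseteq> U2"
        using Int.IH by (meson IntD1 IntD2)
      moreover have "weak_star_box x (F1 \<union> F2) (min \<delta>1 \<delta>2) \<subseteq> weak_star_box x F1 \<delta>1 \<inter> weak_star_box x F2 \<delta>2"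
        by (intro Int_greatest weak_star_box_antimono) auto
      ultimately show "\<exists>F \<delta>. finite F \<and> \<delta> > 0 \<and> weak_star_box x F \<delta> \<subseteq> U1 \<inter> U2"
        by (intro exI[of _ "F1 \<union> F2"] exI[of _ "min \<delta>1 \<delta>2"]) auto
    qed
  next
    case (UN K)
    then show ?case by (meson UnionE UnionI subsetI subset_iff)
  next
    case (Basis S)
    then obtain y W where S: "S = {x. blinfun_apply x y \<in> W}" and W: "open W" by blast
    show ?case
    proof
      fix x assume "x \<in> S"
      then obtain e where e: "e > 0" "ball (blinfun_apply x y) e \<subseteq> W"
        using W S openE by blast
      then have "weak_star_box x {y} e \<subseteq> S"
        unfolding S weak_star_box_def by (auto simp: dist_real_def abs_minus_commute)
      then show "\<exists>F \<delta>. finite F \<and> \<delta> > 0 \<and> weak_star_box x F \<delta> \<subseteq> S"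
        using e(1) by blast
    qed
  qed simp
  then show ?thesis using assms(2) by blast
qed

text \<open>Lower bound (needs only pointwise convergence): for each y, the weak-star
  neighbourhood where z y > x y - e keeps (g_n)*(z) \<ge> x y - e - g_n(y).\<close>

lemma conjugate_le_gamma_liminf:
  fixes gs :: "nat \<Rightarrow> 'a::real_normed_vector \<Rightarrow> real"
  assumes pointwise: "\<And>y. (\<lambda>n. gs n y) \<longlonglongrightarrow> g y"
  shows "conjugate g x \<le> gamma_liminf weak_star_topology (\<lambda>n. conjugate (gs n)) x"
  unfolding conjugate_def[of g]
proof (rule SUP_least)
  fix y :: 'a
  show "ereal (blinfun_apply x y - g y) \<le> gamma_liminf weak_star_topology (\<lambda>n. conjugate (gs n)) x"
  proof (rule ereal_le_epsilon2)
    fix e :: real assume e: "e > 0"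
    define V where "V = {z. blinfun_apply z y \<in> {blinfun_apply x y - e <..}}"
    have "openin weak_star_topology V"
      unfolding V_def by (rule weak_star_subbasic_open) simp
    then have V: "V \<in> nbhds_in weak_star_topology x"
      unfolding nbhds_in_def using e by (auto simp: V_def)
    have "ereal (blinfun_apply x y - e - gs n y) \<le> (INF z\<in>V. conjugate (gs n) z)" for n
    proof (rule INF_greatest)
      fix z assume "z \<in> V"
      then have "ereal (blinfun_apply x y - e - gs n y) \<le> ereal (blinfun_apply z y - gs n y)"
        unfolding V_def by simp
      also have "\<dots> \<le> conjugate (gs n) z"
        unfolding conjugate_def by (rule SUP_upper) simp
      finally show "ereal (blinfun_apply x y - e - gs n y) \<le> conjugate (gs n) z" .
    qed
    then have "liminf (\<lambda>n. ereal (blinfun_apply x y - e - gs n y))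
        \<le> liminf (\<lambda>n. INF z\<in>V. conjugate (gs n) z)"
      by (intro Liminf_mono) simp
    moreover have "liminf (\<lambda>n. ereal (blinfun_apply x y - e - gs n y)) = ereal (blinfun_apply x y - e - g y)"
      by (intro lim_imp_Liminf tendsto_ereal tendsto_diff tendsto_const pointwise) simp
    moreover have "liminf (\<lambda>n. INF z\<in>V. conjugate (gs n) z)
        \<le> gamma_liminf weak_star_topology (\<lambda>n. conjugate (gs n)) x"
      unfolding gamma_liminf_def by (rule SUP_upper[OF V])
    ultimately have "ereal (blinfun_apply x y - e - g y)
        \<le> gamma_liminf weak_star_topology (\<lambda>n. conjugate (gs n)) x"
      by simp
    from add_right_mono[OF this, of "ereal e"]
    show "ereal (blinfun_apply x y - g y)
        \<le> gamma_liminf weak_star_topology (\<lambda>n. conjugate (gs n)) x + ereal e"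
      by simp
  qed
qed

lemma convex_on_minus_linear_plus_const:
  assumes "convex_on UNIV f" and "linear x"
  shows "convex_on UNIV (\<lambda>y. f y - x y + r)"
proof -
  have "convex_on UNIV (\<lambda>y. - x y + r)"
    unfolding convex_on_def using assms(2)
    by (auto simp: linear_add linear_scale linear_neg algebra_simps simp flip: distrib_right)
  with assms(1) show ?thesis
    using convex_on_add[of UNIV f "\<lambda>y. - x y + r"] by (simp add: algebra_simps)
qed

lemma lipschitz_minus_blinfun:
  assumes "\<And>y y'. \<bar>f y - f y'\<bar> \<le> c * norm (y - y')"
  shows "\<bar>(f y - blinfun_apply x y + r) - (f y' - blinfun_apply x y' + r)\<bar>
      \<le> (c + norm x) * norm (y - y')"
proof -
  have "\<bar>blinfun_apply x y - blinfun_apply x y'\<bar> \<le> norm x * norm (y - y')"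
    using norm_blinfun[of x "y - y'"] by (simp add: blinfun.diff_right)
  then show ?thesis using assms[of y y'] by (simp add: algebra_simps abs_triangle_ineq4[THEN order_trans])
qed

text \<open>If x \<le> f + r on a large coefficient box over F and
  f(0) + r \<le> B, then some z weak-star close to x on F has f*(z) \<le> r: z = x + u with u a
  bounded linear minorant of f - x + r that is small on F.\<close>

lemma conjugate_le_near:
  fixes f :: "'a::real_normed_vector \<Rightarrow> real" and x :: "'a \<Rightarrow>\<^sub>L real"
  assumes convex: "convex_on UNIV f"
    and lipschitz: "\<And>y y'. \<bar>f y - f y'\<bar> \<le> c * norm (y - y')"
    and F: "finite F" and d: "d > 0" and B: "B > 0" and at_zero: "f 0 + r \<le> B"
    and box: "\<forall>w\<in>coefficient_box F (B / d). f w - blinfun_apply x w + r \<ge> 0"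
  shows "\<exists>z. (\<forall>y\<in>F. \<bar>blinfun_apply z y - blinfun_apply x y\<bar> \<le> d) \<and> conjugate f z \<le> ereal r"
proof -
  define h where "h y = f y - blinfun_apply x y + r" for y
  have "convex_on UNIV h"
    unfolding h_def
    by (rule convex_on_minus_linear_plus_const[OF convex
          bounded_linear.linear[OF blinfun.bounded_linear_right]])
  moreover have "h (\<Sum>y\<in>F. a y *\<^sub>R y) + d * (\<Sum>y\<in>F. \<bar>a y\<bar>) \<ge> 0" for a
    by (rule convex_nonneg_on_box_penalized[OF \<open>convex_on UNIV h\<close> F d B])
      (use at_zero box in \<open>simp_all add: h_def\<close>)
  ultimately interpret penalized_minorant h F d "c + norm x"
    using F d lipschitz_minus_blinfun[OF lipschitz] unfolding h_def by unfold_locales auto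
  obtain u where u: "bounded_linear u" "\<forall>y. u y \<le> h y" "\<forall>y\<in>F. \<bar>u y\<bar> \<le> d"
    using bounded_linear_minorant by blast
  define z where "z = x + Blinfun u"
  have z: "blinfun_apply z y = blinfun_apply x y + u y" for y
    unfolding z_def using bounded_linear_Blinfun_apply[OF u(1)] by (simp add: plus_blinfun.rep_eq)
  have "conjugate f z \<le> ereal r"
  proof (unfold conjugate_def, rule SUP_least)
    fix y
    have "u y \<le> f y - blinfun_apply x y + r" using u(2) unfolding h_def by blast
    then show "ereal (blinfun_apply z y - f y) \<le> ereal r" using z[of y] by simp
  qed
  moreover have "\<forall>y\<in>F. \<bar>blinfun_apply z y - blinfun_apply x y\<bar> \<le> d"
    using u(3) z by simp
  ultimately show ?thesis by blast
qed

text \<open>The upper bound eventually holds near x: the functions g_n - x + s + \<epsilon> converge to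
  g - x + s + \<epsilon> \<ge> \<epsilon>, hence are eventually nonnegative on each compact coefficient box.\<close>

lemma eventually_conjugate_le_near:
  fixes gs :: "nat \<Rightarrow> 'a::real_normed_vector \<Rightarrow> real" and x :: "'a \<Rightarrow>\<^sub>L real"
  assumes convex: "\<And>n. convex_on UNIV (gs n)"
    and lipschitz: "\<And>n y y'. \<bar>gs n y - gs n y'\<bar> \<le> c * norm (y - y')" and c: "c > 0"
    and pointwise: "\<And>y. (\<lambda>n. gs n y) \<longlonglongrightarrow> g y"
    and below: "\<And>y. blinfun_apply x y - g y \<le> s"
    and \<epsilon>: "\<epsilon> > 0" and F: "finite F" and d: "d > 0"
  shows "\<forall>\<^sub>F n in sequentially. \<exists>z. (\<forall>y\<in>F. \<bar>blinfun_apply z y - blinfun_apply x y\<bar> \<le> d)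
           \<and> conjugate (gs n) z \<le> ereal (s + \<epsilon>)"
proof -
  define hs where "hs n y = gs n y - blinfun_apply x y + (s + \<epsilon>)" for n y
  define l where "l y = g y - blinfun_apply x y + (s + \<epsilon>)" for y
  define B where "B = l 0 + 1"
  have lim: "(\<lambda>n. hs n y) \<longlonglongrightarrow> l y" for y
    unfolding hs_def l_def by (intro tendsto_intros pointwise)
  have l_ge: "l y \<ge> \<epsilon>" for y using below[of y] unfolding l_def by simp
  have B: "B > 0" unfolding B_def using l_ge[of 0] \<epsilon> by simp
  have "\<forall>\<^sub>F n in sequentially. \<forall>w\<in>coefficient_box F (B / d). hs n w \<ge> 0"
    using lipschitz_minus_blinfun[OF lipschitz] c
    by (intro eventually_nonneg_on_compact[where C="c + norm x",
          OF compact_coefficient_box[OF F] _ _ lim \<epsilon> l_ge])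
      (auto simp: hs_def add_pos_nonneg)
  moreover have "\<forall>\<^sub>F n in sequentially. hs n 0 < B"
    using lim[of 0] by (rule order_tendstoD(2)) (simp add: B_def)
  ultimately show ?thesis
  proof eventually_elim
    case (elim n)
    then show ?case
      by (intro conjugate_le_near[OF convex lipschitz F d B]) (auto simp: hs_def)
  qed
qed

lemma gamma_limsup_le_conjugate:
  fixes gs :: "nat \<Rightarrow> 'a::real_normed_vector \<Rightarrow> real"
  assumes convex: "\<And>n. convex_on UNIV (gs n)"
    and lipschitz: "\<And>n y y'. \<bar>gs n y - gs n y'\<bar> \<le> c * norm (y - y')" and c: "c > 0"
    and pointwise: "\<And>y. (\<lambda>n. gs n y) \<longlonglongrightarrow> g y"
  shows "gamma_limsup weak_star_topology (\<lambda>n. conjugate (gs n)) x \<le> conjugate g x"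
proof (cases "conjugate g x = \<infinity>")
  case False
  have "ereal (blinfun_apply x y - g y) \<le> conjugate g x" for y
    unfolding conjugate_def by (rule SUP_upper) simp
  moreover from this[of 0] False obtain s where s: "conjugate g x = ereal s"
    by (cases "conjugate g x") auto
  ultimately have below: "blinfun_apply x y - g y \<le> s" for y by (metis ereal_less_eq(3))
  have "gamma_limsup weak_star_topology (\<lambda>n. conjugate (gs n)) x \<le> ereal s + ereal \<epsilon>"
    if \<epsilon>: "\<epsilon> > 0" for \<epsilon>
    unfolding gamma_limsup_def
  proof (rule SUP_least)
    fix V assume "V \<in> nbhds_in weak_star_topology x"
    then obtain U where U: "openin weak_star_topology U" "x \<in> U" "U \<subseteq> V"
      unfolding nbhds_in_def by blast
    obtain F \<delta> where F: "finite F" and \<delta>: "\<delta> > 0" and box: "weak_star_box x F \<delta> \<subseteq> U"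
      using weak_star_open_contains_box[OF U(1,2)] by blast
    have "\<forall>\<^sub>F n in sequentially. (INF z\<in>V. conjugate (gs n) z) \<le> ereal (s + \<epsilon>)"
      using eventually_conjugate_le_near[OF convex lipschitz c pointwise below \<epsilon> F half_gt_zero[OF \<delta>]]
    proof eventually_elim
      case (elim n)
      then obtain z where z_near: "\<forall>y\<in>F. \<bar>blinfun_apply z y - blinfun_apply x y\<bar> \<le> \<delta> / 2"
        and z_le: "conjugate (gs n) z \<le> ereal (s + \<epsilon>)" by auto
      have "z \<in> V"
        using z_near \<delta> box U(3) unfolding weak_star_box_def by fastforce
      then show ?case using z_le by (blast intro: INF_lower2)
    qed
    then show "limsup (\<lambda>n. INF z\<in>V. conjugate (gs n) z) \<le> ereal s + ereal \<epsilon>"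
      using Limsup_bounded by fastforce
  qed
  then show ?thesis unfolding s by (rule ereal_le_epsilon2)
qed simp

lemma gamma_liminf_le_gamma_limsup:
  "gamma_liminf T f x \<le> gamma_limsup T f x"
  unfolding gamma_liminf_def gamma_limsup_def
  by (rule SUP_mono) (use Liminf_le_Limsup[OF sequentially_bot] in blast)

theorem mainTheorem16:
  fixes gs :: "nat \<Rightarrow> 'a::real_normed_vector \<Rightarrow> real"
    and g :: "'a \<Rightarrow> real"
    and c :: real
  assumes convex: "\<And>n. convex_on UNIV (gs n)"
    and pointwise: "\<And>y. (\<lambda>n. gs n y) \<longlonglongrightarrow> g y"
    and c_pos: "c > 0"
    and growth: "\<And>n y. \<bar>gs n y\<bar> \<le> c * (1 + norm y)"
  shows "gamma_converges weak_star_topology (\<lambda>n. conjugate (gs n)) (conjugate g)"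
  unfolding gamma_converges_def
proof (intro allI conjI)
  fix x
  have lipschitz: "\<bar>gs n y - gs n y'\<bar> \<le> c * norm (y - y')" for n y y'
    by (rule convex_linear_growth_lipschitz[OF convex growth])
  have lower: "conjugate g x \<le> gamma_liminf weak_star_topology (\<lambda>n. conjugate (gs n)) x"
    by (rule conjugate_le_gamma_liminf[OF pointwise])
  have upper: "gamma_limsup weak_star_topology (\<lambda>n. conjugate (gs n)) x \<le> conjugate g x"
    by (rule gamma_limsup_le_conjugate[OF convex lipschitz c_pos pointwise])
  note between = gamma_liminf_le_gamma_limsup[of weak_star_topology "\<lambda>n. conjugate (gs n)" x]
  show "gamma_liminf weak_star_topology (\<lambda>n. conjugate (gs n)) x = conjugate g x"
    using lower upper between by order
  show "gamma_limsup weak_star_topology (\<lambda>n. conjugate (gs n)) x = conjugate g x"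
    using lower upper between by order
qed

end
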